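(* Let $\kappa\ge 3$ be an integer, $\mathcal{P}_0$ a finite set of primes, and $\omega$ a nonnegative integer-valued function on the primes with $\omega(p)<\kappa$ for $p\in\mathcal{P}_0$, $\omega(p)=\kappa$ for primes $p\notin\mathcal{P}_0$, and $\omega(p)<p$ for all primes $p$. Define $\omega_0(p)=\kappa$ for $p>\kappa$ and $\omega_0(p)=\omega(p)$ for $p\le\kappa$. Then for all $z>0$, \[L(z,\omega)\geq \prod_{\substack{p\in\mathcal{P}_0\\ p>\kappa}}\frac{p-\kappa}{p-\omega(p)}\,L(z,\omega_0).\]
   Context: For a function $h$ on the primes with $0\le h(p)<p$ for all $p$, and $z>0$, define $L(z,h)=\sum_{q\leq z}\mu^2(q)\prod_{p\mid q}\frac{h(p)}{p-h(p)}$, where $q$ runs over positive integers and $\mu$ is the Möbius function. *)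

theory Defs
  imports "HOL-Analysis.Analysis" "HOL-Computational_Algebra.Squarefree"
begin

definition L :: "real \<Rightarrow> (nat \<Rightarrow> nat) \<Rightarrow> real" where
  "L z h = (\<Sum>q \<in> {q. 0 < q \<and> real q \<le> z \<and> squarefree q}.
              \<Prod>p \<in> prime_factors q. real (h p) / (real p - real (h p)))"

end

theory Submission
  imports Defs
begin

(* Let g_h(q) be the product over primes p | q of h(p)/(p - h(p)), multiplicative on squarefree q.
   Fixing a prime p and splitting L(z,h) according to whether p divides q gives
   L(z,h) = A(z) + g_h(p) A(z/p), where A(y) sums g_h over the squarefree q <= y prime to p and
   does not depend on h(p). Raising h(p) to h'(p) therefore gives
   (p - h'(p)) L(z,h') = (p - h'(p)) A(z) + h'(p) A(z/p) <= (p - h(p)) L(z,h), since A(z/p) <= A(z).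
   Raising omega to kappa at the primes of P0 above kappa, one at a time, turns omega into omega_0. *)

definition squarefree_upto :: "real \<Rightarrow> nat set" where
  "squarefree_upto y = {q. 0 < q \<and> real q \<le> y \<and> squarefree q}"

definition sf_weight :: "(nat \<Rightarrow> nat) \<Rightarrow> nat \<Rightarrow> real" where
  "sf_weight h q = (\<Prod>p \<in> prime_factors q. real (h p) / (real p - real (h p)))"

definition L_coprime :: "(nat \<Rightarrow> nat) \<Rightarrow> nat \<Rightarrow> real \<Rightarrow> real" where
  "L_coprime h p y = (\<Sum>q \<in> {q \<in> squarefree_upto y. \<not> p dvd q}. sf_weight h q)"

lemma finite_squarefree_upto [simp]: "finite (squarefree_upto y)"
proof (rule finite_subset)
  show "squarefree_upto y \<subseteq> {..nat \<lceil>y\<rceil>}"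
    unfolding squarefree_upto_def by (auto simp: le_nat_iff le_ceiling_iff)
qed simp

lemma L_eq_sum_sf_weight: "L z h = (\<Sum>q \<in> squarefree_upto z. sf_weight h q)"
  unfolding L_def sf_weight_def squarefree_upto_def ..

lemma squarefree_prime_mult_iff:
  fixes p m :: nat
  assumes "prime p"
  shows "squarefree (p * m) \<longleftrightarrow> squarefree m \<and> \<not> p dvd m"
proof
  assume sf: "squarefree (p * m)"
  have "\<not> p dvd m"
  proof
    assume "p dvd m"
    then have "p * p dvd p * m" by simp
    with sf assms show False unfolding squarefree_def by (metis power2_eq_square not_prime_unit)
  qed
  with sf show "squarefree m \<and> \<not> p dvd m" using squarefree_multD(2) by blast
next
  assume "squarefree m \<and> \<not> p dvd m"
  with assms show "squarefree (p * m)"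
    by (intro squarefree_mult_coprime) (auto simp: squarefree_prime prime_imp_coprime)
qed

lemma squarefree_upto_multiples_of_prime:
  assumes "prime p"
  shows "{q \<in> squarefree_upto z. p dvd q} = (*) p ` {m \<in> squarefree_upto (z / p). \<not> p dvd m}"
proof -
  have "real (p * m) \<le> z \<longleftrightarrow> real m \<le> z / p" for m
    using prime_gt_0_nat[OF assms] by (simp add: le_divide_eq mult.commute)
  then show ?thesis
    using assms prime_gt_0_nat[OF assms] squarefree_prime_mult_iff[OF assms]
    unfolding squarefree_upto_def by (auto simp: image_iff elim!: dvdE)
qed

lemma sf_weight_nonneg:
  assumes "\<forall>q. prime q \<longrightarrow> h q < q"
  shows "sf_weight h m \<ge> 0"
  unfolding sf_weight_def using assms by (intro prod_nonneg) (auto simp: in_prime_factors_iff)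

lemma sf_weight_cong:
  assumes "\<forall>q. prime q \<and> q dvd m \<longrightarrow> h q = h' q"
  shows "sf_weight h m = sf_weight h' m"
  unfolding sf_weight_def using assms by (intro prod.cong) (auto simp: in_prime_factors_iff)

lemma sf_weight_prime_mult:
  assumes "prime p" "\<not> p dvd m" "m > 0"
  shows "sf_weight h (p * m) = real (h p) / (real p - real (h p)) * sf_weight h m"
proof -
  have "prime_factors (p * m) = insert p (prime_factors m)"
    using assms by (simp add: prime_factors_product prime_prime_factors)
  moreover have "p \<notin> prime_factors m" using assms by auto
  ultimately show ?thesis unfolding sf_weight_def by simp
qed

lemma L_cong:
  assumes "\<forall>q. prime q \<longrightarrow> h q = h' q"
  shows "L z h = L z h'"
  unfolding L_eq_sum_sf_weight using assms by (intro sum.cong sf_weight_cong) auto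

lemma L_coprime_cong:
  assumes "\<forall>q. prime q \<and> q \<noteq> p \<longrightarrow> h q = h' q"
  shows "L_coprime h p y = L_coprime h' p y"
  unfolding L_coprime_def using assms by (intro sum.cong sf_weight_cong) auto

lemma L_coprime_mono:
  assumes "\<forall>q. prime q \<longrightarrow> h q < q" "y \<le> y'"
  shows "L_coprime h p y \<le> L_coprime h p y'"
  unfolding L_coprime_def using assms
  by (intro sum_mono2 sf_weight_nonneg) (simp, auto simp: squarefree_upto_def)

lemma L_split_at_prime:
  assumes "prime p"
  shows "L z h = L_coprime h p z + real (h p) / (real p - real (h p)) * L_coprime h p (z / p)"
proof -
  define M where "M = {m \<in> squarefree_upto (z / p). \<not> p dvd m}"
  have inj: "inj_on ((*) p) M"
    using prime_gt_0_nat[OF assms] by (intro inj_onI) simp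
  have "(\<Sum>q \<in> squarefree_upto z. sf_weight h q)
      = (\<Sum>q \<in> {q \<in> squarefree_upto z. \<not> p dvd q}. sf_weight h q)
        + (\<Sum>q \<in> {q \<in> squarefree_upto z. p dvd q}. sf_weight h q)"
    by (subst sum.union_disjoint [symmetric]) (auto intro: sum.cong)
  also have "(\<Sum>q \<in> {q \<in> squarefree_upto z. p dvd q}. sf_weight h q)
      = (\<Sum>m \<in> M. sf_weight h (p * m))"
    unfolding squarefree_upto_multiples_of_prime[OF assms] M_def [symmetric]
    by (simp add: sum.reindex[OF inj])
  also have "\<dots> = (\<Sum>m \<in> M. real (h p) / (real p - real (h p)) * sf_weight h m)"
    using assms by (intro sum.cong sf_weight_prime_mult) (auto simp: M_def squarefree_upto_def)
  finally show ?thesis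
    unfolding L_eq_sum_sf_weight L_coprime_def M_def by (simp add: sum_distrib_left)
qed

lemma L_raise_at_prime:
  assumes p: "prime p" and "z > 0"
    and agree: "\<forall>q. prime q \<and> q \<noteq> p \<longrightarrow> h q = h' q"
    and le: "h p \<le> h' p"
    and hlt: "\<forall>q. prime q \<longrightarrow> h q < q" and hlt': "\<forall>q. prime q \<longrightarrow> h' q < q"
  shows "(real p - real (h' p)) / (real p - real (h p)) * L z h' \<le> L z h"
proof -
  define A where "A = L_coprime h p z"
  define A' where "A' = L_coprime h p (z / p)"
  have "real p \<ge> 1" using prime_ge_1_nat[OF p] by simp
  then have "A' \<le> A"
    unfolding A_def A'_def using \<open>z > 0\<close> by (intro L_coprime_mono[OF hlt]) (simp add: divide_le_eq)
  then have key: "(real (h' p) - real (h p)) * A' \<le> (real (h' p) - real (h p)) * A"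
    using le by (intro mult_left_mono) auto
  have Lh: "L z h = A + real (h p) / (real p - real (h p)) * A'"
    unfolding A_def A'_def by (rule L_split_at_prime[OF p])
  have Lh': "L z h' = A + real (h' p) / (real p - real (h' p)) * A'"
    unfolding A_def A'_def using L_split_at_prime[OF p, of z h'] L_coprime_cong[OF agree] by simp
  have pos: "real p - real (h p) > 0" "real p - real (h' p) > 0" using hlt hlt' p by auto
  have "(real p - real (h' p)) * L z h' = (real p - real (h' p)) * A + real (h' p) * A'"
    unfolding Lh' using pos by (simp add: field_simps)
  also have "\<dots> \<le> (real p - real (h p)) * A + real (h p) * A'"
    using key by (simp add: algebra_simps)
  also have "\<dots> = (real p - real (h p)) * L z h"
    unfolding Lh using pos by (simp add: field_simps)
  finally show ?thesis
    using pos by (simp add: pos_divide_le_eq mult.commute)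
qed

lemma L_raise_on_set:
  assumes "finite S" "\<forall>p \<in> S. prime p" "z > 0"
    and agree: "\<forall>q. prime q \<and> q \<notin> S \<longrightarrow> h q = h' q"
    and le: "\<forall>p \<in> S. h p \<le> h' p"
    and hlt: "\<forall>q. prime q \<longrightarrow> h q < q" and hlt': "\<forall>q. prime q \<longrightarrow> h' q < q"
  shows "(\<Prod>p \<in> S. (real p - real (h' p)) / (real p - real (h p))) * L z h' \<le> L z h"
proof -
  define H where "H T p = (if p \<in> T then h' p else h p)" for T p
  have Hlt: "\<forall>q. prime q \<longrightarrow> H T q < q" for T
    using hlt hlt' unfolding H_def by auto
  have raise: "(\<Prod>p \<in> T. (real p - real (h' p)) / (real p - real (h p))) * L z (H T) \<le> L z h"
    if "T \<subseteq> S" for T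
    using finite_subset[OF that \<open>finite S\<close>] that
  proof (induction T rule: finite_induct)
    case empty
    then show ?case by (simp add: H_def)
  next
    case (insert p T)
    have "prime p" "h p \<le> h' p" using insert.prems assms(2) le by auto
    have "(real p - real (H (insert p T) p)) / (real p - real (H T p)) * L z (H (insert p T))
        \<le> L z (H T)"
      by (rule L_raise_at_prime[OF \<open>prime p\<close> \<open>z > 0\<close> _ _ Hlt Hlt])
        (use \<open>h p \<le> h' p\<close> insert.hyps(2) in \<open>auto simp: H_def\<close>)
    then have step: "(real p - real (h' p)) / (real p - real (h p)) * L z (H (insert p T))
        \<le> L z (H T)"
      using insert.hyps(2) by (simp add: H_def)
    have "(\<Prod>p \<in> T. (real p - real (h' p)) / (real p - real (h p))) \<ge> 0"
      using hlt hlt' insert.prems assms(2) by (intro prod_nonneg) (auto simp: less_imp_le)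
    from mult_left_mono[OF step this]
    have "(\<Prod>p \<in> insert p T. (real p - real (h' p)) / (real p - real (h p)))
        * L z (H (insert p T)) \<le> (\<Prod>p \<in> T. (real p - real (h' p)) / (real p - real (h p))) * L z (H T)"
      using insert.hyps by (simp add: mult.assoc mult.left_commute)
    also have "\<dots> \<le> L z h" using insert by simp
    finally show ?case .
  qed
  have "L z (H S) = L z h'"
    using agree by (intro L_cong) (auto simp: H_def)
  with raise[OF order_refl] show ?thesis by simp
qed

theorem corollary1:
  fixes \<kappa> :: nat and P0 :: "nat set" and \<omega> :: "nat \<Rightarrow> nat" and z :: real
  assumes "\<kappa> \<ge> 3"
    and "finite P0" and "\<forall>p\<in>P0. prime p"
    and "\<forall>p\<in>P0. \<omega> p < \<kappa>"
    and "\<forall>p. prime p \<and> p \<notin> P0 \<longrightarrow> \<omega> p = \<kappa>"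
    and "\<forall>p. prime p \<longrightarrow> \<omega> p < p"
    and "z > 0"
  shows "L z \<omega> \<ge>
           (\<Prod>p \<in> {p \<in> P0. p > \<kappa>}. (real p - real \<kappa>) / (real p - real (\<omega> p)))
           * L z (\<lambda>p. if p > \<kappa> then \<kappa> else \<omega> p)"
proof -
  define \<omega>\<^sub>0 where "\<omega>\<^sub>0 p = (if p > \<kappa> then \<kappa> else \<omega> p)" for p
  define S where "S = {p \<in> P0. p > \<kappa>}"
  have "(\<Prod>p \<in> S. (real p - real (\<omega>\<^sub>0 p)) / (real p - real (\<omega> p))) * L z \<omega>\<^sub>0 \<le> L z \<omega>"
    using assms(2-7) by (intro L_raise_on_set) (auto simp: S_def \<omega>\<^sub>0_def)
  moreover have "(\<Prod>p \<in> S. (real p - real (\<omega>\<^sub>0 p)) / (real p - real (\<omega> p)))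
      = (\<Prod>p \<in> S. (real p - real \<kappa>) / (real p - real (\<omega> p)))"
    by (intro prod.cong) (auto simp: S_def \<omega>\<^sub>0_def)
  ultimately show ?thesis unfolding S_def \<omega>\<^sub>0_def by simp
qed

end
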